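(* Let $G$ be a finite, simple, undirected, connected graph whose vertex set $V(G)$ is a set of integers. Then there exists an elimination tree $T$ of $G$ whose depth equals the treedepth of $G$ and which has the following property: for every vertex $w \in V(G)$ and every vertex $v \in V(G)$ that dominates $w$ in $G$, the vertex $w$ is not an ancestor of $v$ in $T$.
   Context: For a vertex $x$ of $G$, $N(x)$ denotes the set of neighbours of $x$ in $G$. A treedepth decomposition of $G$ is a rooted forest $F$ on vertex set $V(G)$ such that for every edge $\{u,v\}$ of $G$, either $u$ is an ancestor of $v$ or $v$ is an ancestor of $u$ in $F$. The depth of a rooted forest is the maximum number of vertices on a root-to-leaf path. The treedepth of $G$ is the minimum depth of a treedepth decomposition of $G$. An elimination tree of a connected graph $G$ is defined recursively: if $G$ has a single vertex, its elimination tree is $G$ itself (a single root); otherwise, choose a vertex $v$ of $G$, let $F$ be a forest consisting of one elimination tree for each connected component of $G - v$, and form a rooted tree by making $v$ the parent of every root of $F$. Given distinct vertices $v, w \in V(G)$ (adjacent or not), $v$ dominates $w$ in $G$ if either (1) $N(v) \setminus \{w\}$ is a proper superset of $N(w) \setminus \{v\}$, or (2) $N(v) \setminus \{w\} = N(w) \setminus \{v\}$ and $v > w$ (comparison as integers). *)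

theory Defs
  imports Main
begin

definition simple_graph :: "int set \<Rightarrow> (int \<Rightarrow> int \<Rightarrow> bool) \<Rightarrow> bool" where
  "simple_graph V E \<longleftrightarrow> finite V \<and> (\<forall>x y. E x y \<longrightarrow> x \<in> V \<and> y \<in> V)
     \<and> (\<forall>x y. E x y \<longrightarrow> E y x) \<and> (\<forall>x. \<not> E x x)"

definition induced_edges :: "(int \<Rightarrow> int \<Rightarrow> bool) \<Rightarrow> int set \<Rightarrow> (int \<times> int) set" where
  "induced_edges E S = {(a, b). a \<in> S \<and> b \<in> S \<and> E a b}"

definition connected_on :: "(int \<Rightarrow> int \<Rightarrow> bool) \<Rightarrow> int set \<Rightarrow> bool" where
  "connected_on E S \<longleftrightarrow> S \<noteq> {} \<and> (\<forall>x\<in>S. \<forall>y\<in>S. (x, y) \<in> (induced_edges E S)\<^sup>*)"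

definition components :: "(int \<Rightarrow> int \<Rightarrow> bool) \<Rightarrow> int set \<Rightarrow> int set set" where
  "components E S = {{y \<in> S. (x, y) \<in> (induced_edges E S)\<^sup>*} | x. x \<in> S}"

definition nbhd :: "int set \<Rightarrow> (int \<Rightarrow> int \<Rightarrow> bool) \<Rightarrow> int \<Rightarrow> int set" where
  "nbhd V E x = {y \<in> V. E x y}"

definition dominates :: "int set \<Rightarrow> (int \<Rightarrow> int \<Rightarrow> bool) \<Rightarrow> int \<Rightarrow> int \<Rightarrow> bool" where
  "dominates V E v w \<longleftrightarrow> v \<noteq> w \<and>
     (nbhd V E v - {w} \<supset> nbhd V E w - {v} \<or>
      (nbhd V E v - {w} = nbhd V E w - {v} \<and> v > w))"

text \<open>Rooted forests on V are represented by a child-to-parent relation P: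
every vertex has at most one parent, and there are no cycles.\<close>
definition rooted_forest :: "int set \<Rightarrow> (int \<times> int) set \<Rightarrow> bool" where
  "rooted_forest V P \<longleftrightarrow> P \<subseteq> V \<times> V \<and> single_valued P \<and> (\<forall>x. (x, x) \<notin> P\<^sup>+)"

definition anc :: "(int \<times> int) set \<Rightarrow> int \<Rightarrow> int \<Rightarrow> bool" where
  "anc P a d \<longleftrightarrow> (d, a) \<in> P\<^sup>+"

text \<open>Depth: maximum number of vertices on a root-to-leaf path, i.e. the maximum over
vertices x of the number of vertices on the path from x to its root.\<close>
definition forest_depth :: "int set \<Rightarrow> (int \<times> int) set \<Rightarrow> nat" where
  "forest_depth V P = Max ((\<lambda>x. card {y. (x, y) \<in> P\<^sup>*}) ` V)"

definition td_decomposition :: "int set \<Rightarrow> (int \<Rightarrow> int \<Rightarrow> bool) \<Rightarrow> (int \<times> int) set \<Rightarrow> bool" where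
  "td_decomposition V E P \<longleftrightarrow> rooted_forest V P \<and>
     (\<forall>u v. E u v \<longrightarrow> anc P u v \<or> anc P v u)"

definition treedepth :: "int set \<Rightarrow> (int \<Rightarrow> int \<Rightarrow> bool) \<Rightarrow> nat" where
  "treedepth V E = (LEAST k. \<exists>P. td_decomposition V E P \<and> forest_depth V P = k)"

inductive elim_tree :: "(int \<Rightarrow> int \<Rightarrow> bool) \<Rightarrow> int set \<Rightarrow> int \<Rightarrow> (int \<times> int) set \<Rightarrow> bool"
  for E where
  single: "elim_tree E {v} v {}"
| step: "\<lbrakk> v \<in> S; S \<noteq> {v};
           \<forall>C \<in> components E (S - {v}). elim_tree E C (rt C) (Q C);
           P = (\<Union>C \<in> components E (S - {v}). insert (rt C, v) (Q C)) \<rbrakk>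
         \<Longrightarrow> elim_tree E S v P"

end

theory Submission
  imports Defs "HOL-Combinatorics.Transposition" "HOL-Library.Product_Lexorder"
begin

text \<open>Every treedepth decomposition of a connected graph has a top vertex, and it can be turned into
  an elimination tree with the same root and no greater depth: recursively take the top vertex of
  each component of what remains. Hence optimal elimination trees exist, and the root of one can be
  replaced by any vertex u whose neighbourhood contains that of the root: swapping the labels of
  root and u keeps a treedepth decomposition. Among all optimal elimination trees choose one whose
  root has the largest number of neighbours, ties broken by the larger label; a vertex dominating
  the root would beat it, and recursing into the components gives the property everywhere.\<close>

section \<open>Connected components\<close>

lemma sym_induced_edges: "symp E \<Longrightarrow> sym (induced_edges E S)"
  unfolding induced_edges_def by (auto simp: symp_def sym_def)

lemma components_subset: "C \<in> components E S \<Longrightarrow> C \<subseteq> S"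
  unfolding components_def by auto

lemma components_nonempty: "C \<in> components E S \<Longrightarrow> C \<noteq> {}"
  unfolding components_def by auto

lemma component_exists: "x \<in> S \<Longrightarrow> \<exists>C\<in>components E S. x \<in> C"
  unfolding components_def by auto

lemma component_eq:
  assumes "symp E" "C \<in> components E S" "x \<in> C"
  shows "C = {y \<in> S. (x, y) \<in> (induced_edges E S)\<^sup>*}"
proof -
  obtain z where z: "z \<in> S" "C = {y \<in> S. (z, y) \<in> (induced_edges E S)\<^sup>*}"
    using assms(2) unfolding components_def by auto
  then have zx: "(z, x) \<in> (induced_edges E S)\<^sup>*" using assms(3) by auto
  then have "(x, z) \<in> (induced_edges E S)\<^sup>*"
    using sym_rtrancl[OF sym_induced_edges[OF assms(1)]] by (rule symD[rotated])
  then show ?thesis using z zx by (auto intro: rtrancl_trans)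
qed

lemma component_unique:
  assumes "symp E" "C \<in> components E S" "C' \<in> components E S" "x \<in> C" "x \<in> C'"
  shows "C = C'"
  using component_eq[OF assms(1,2,4)] component_eq[OF assms(1,3,5)] by simp

lemma component_edge_closed:
  assumes "symp E" "C \<in> components E S" "a \<in> C" "b \<in> S" "E a b"
  shows "b \<in> C"
proof -
  have "(a, b) \<in> induced_edges E S"
    using assms components_subset[OF assms(2)] unfolding induced_edges_def by auto
  then show ?thesis using component_eq[OF assms(1-3)] assms(4) by auto
qed

lemma connected_on_component:
  assumes "symp E" "C \<in> components E S"
  shows "connected_on E C"
proof -
  obtain x where x: "x \<in> C" using components_nonempty[OF assms(2)] by auto
  have C: "C = {y \<in> S. (x, y) \<in> (induced_edges E S)\<^sup>*}" using component_eq[OF assms x] .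
  have reach: "(x, y) \<in> (induced_edges E C)\<^sup>*" if "(x, y) \<in> (induced_edges E S)\<^sup>*" for y
    using that
  proof (induction rule: rtrancl_induct)
    case (step y z)
    then have "(y, z) \<in> induced_edges E C"
      using C x components_subset[OF assms(2)]
      by (auto simp: induced_edges_def intro: rtrancl_into_rtrancl)
    with step.IH show ?case by (rule rtrancl_into_rtrancl)
  qed simp
  have "(a, b) \<in> (induced_edges E C)\<^sup>*" if "a \<in> C" "b \<in> C" for a b
  proof -
    have "(x, a) \<in> (induced_edges E C)\<^sup>*" "(x, b) \<in> (induced_edges E C)\<^sup>*"
      using reach that C by auto
    moreover have "sym ((induced_edges E C)\<^sup>*)"
      using sym_induced_edges[OF assms(1)] by (rule sym_rtrancl)
    ultimately show ?thesis by (meson rtrancl_trans symD)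
  qed
  then show ?thesis unfolding connected_on_def using x by auto
qed

section \<open>Grafting elimination trees below a root\<close>

definition edges_comparable :: "(int \<Rightarrow> int \<Rightarrow> bool) \<Rightarrow> int set \<Rightarrow> (int \<times> int) set \<Rightarrow> bool" where
  "edges_comparable E S P \<longleftrightarrow> (\<forall>a\<in>S. \<forall>b\<in>S. E a b \<longrightarrow> anc P a b \<or> anc P b a)"

lemma edges_comparable_subset:
  "edges_comparable E S P \<Longrightarrow> C \<subseteq> S \<Longrightarrow> edges_comparable E C P"
  unfolding edges_comparable_def by blast

definition td_tree :: "(int \<Rightarrow> int \<Rightarrow> bool) \<Rightarrow> int set \<Rightarrow> int \<Rightarrow> (int \<times> int) set \<Rightarrow> bool" where
  "td_tree E S r P \<longleftrightarrow> r \<in> S \<and> P \<subseteq> (S - {r}) \<times> S \<and> (\<forall>x\<in>S. (x, r) \<in> P\<^sup>*)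
     \<and> single_valued P \<and> acyclic P \<and> edges_comparable E S P"

lemma rtrancl_stays_in:
  "(x, y) \<in> P\<^sup>* \<Longrightarrow> P \<subseteq> B \<times> A \<Longrightarrow> x \<in> A \<Longrightarrow> y \<in> A"
  by (induction rule: rtrancl_induct) auto

definition graft :: "(int \<Rightarrow> int \<Rightarrow> bool) \<Rightarrow> int set \<Rightarrow> int \<Rightarrow> (int set \<Rightarrow> int)
    \<Rightarrow> (int set \<Rightarrow> (int \<times> int) set) \<Rightarrow> (int \<times> int) set" where
  "graft E S v rt Q = (\<Union>C \<in> components E (S - {v}). insert (rt C, v) (Q C))"

locale elim_step =
  fixes E :: "int \<Rightarrow> int \<Rightarrow> bool" and S :: "int set" and v :: int
    and rt :: "int set \<Rightarrow> int" and Q :: "int set \<Rightarrow> (int \<times> int) set"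
    and P :: "(int \<times> int) set"
  assumes sym: "symp E"
    and v_in: "v \<in> S"
    and td_tree_components: "\<forall>C \<in> components E (S - {v}). td_tree E C (rt C) (Q C)"
    and P_eq: "P = graft E S v rt Q"
begin

abbreviation "Cs \<equiv> components E (S - {v})"

lemma component_subset: "C \<in> Cs \<Longrightarrow> C \<subseteq> S - {v}"
  by (rule components_subset)

lemma Q_subset: "C \<in> Cs \<Longrightarrow> Q C \<subseteq> (C - {rt C}) \<times> C"
  using td_tree_components unfolding td_tree_def by auto

lemma rt_in: "C \<in> Cs \<Longrightarrow> rt C \<in> C"
  using td_tree_components unfolding td_tree_def by auto

lemma Q_subset_P: "C \<in> Cs \<Longrightarrow> Q C \<subseteq> P"
  using P_eq unfolding graft_def by auto

lemma rt_parent: "C \<in> Cs \<Longrightarrow> (rt C, v) \<in> P"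
  using P_eq unfolding graft_def by auto

lemma P_cases:
  assumes "C \<in> Cs" "x \<in> C" "(x, y) \<in> P"
  shows "(x, y) \<in> Q C \<or> (x = rt C \<and> y = v)"
proof -
  obtain C' where C': "C' \<in> Cs" "(x, y) \<in> insert (rt C', v) (Q C')"
    using assms(3) P_eq unfolding graft_def by auto
  then have "x \<in> C'" using Q_subset[OF C'(1)] rt_in[OF C'(1)] by auto
  then have "C' = C" using component_unique[OF sym C'(1) assms(1)] assms(2) by auto
  then show ?thesis using C' by auto
qed

lemma P_domain: "(x, y) \<in> P \<Longrightarrow> \<exists>C\<in>Cs. x \<in> C"
  using P_eq Q_subset rt_in unfolding graft_def by fastforce

lemma P_subset: "P \<subseteq> (S - {v}) \<times> S"
  using P_eq Q_subset rt_in component_subset v_in unfolding graft_def by fastforce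

lemma root_no_parent: "(v, y) \<notin> P"
  using P_subset by auto

lemma rtrancl_P_cases:
  assumes "C \<in> Cs" "x \<in> C" "(x, y) \<in> P\<^sup>*"
  shows "(x, y) \<in> (Q C)\<^sup>* \<or> y = v"
  using assms(3)
proof (induction rule: rtrancl_induct)
  case (step y z)
  show ?case
  proof (cases "y = v")
    case True then show ?thesis using step(2) root_no_parent by simp
  next
    case False
    then have xy: "(x, y) \<in> (Q C)\<^sup>*" using step(3) by simp
    have "y \<in> C" using rtrancl_stays_in[OF xy Q_subset[OF assms(1)] assms(2)] .
    then have "(y, z) \<in> Q C \<or> z = v" using P_cases[OF assms(1) _ step(2)] by blast
    then show ?thesis using xy by auto
  qed
qed simp

lemma ancestors_in_component:
  assumes "C \<in> Cs" "x \<in> C"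
  shows "{y. (x, y) \<in> P\<^sup>*} = insert v {y. (x, y) \<in> (Q C)\<^sup>*}"
    and "{y. (x, y) \<in> (Q C)\<^sup>*} \<subseteq> C"
proof -
  have "(x, rt C) \<in> (Q C)\<^sup>*" using td_tree_components assms unfolding td_tree_def by auto
  moreover have QP: "(Q C)\<^sup>* \<subseteq> P\<^sup>*" using rtrancl_mono[OF Q_subset_P[OF assms(1)]] .
  ultimately have "(x, v) \<in> P\<^sup>*" using rt_parent[OF assms(1)] by (blast intro: rtrancl_into_rtrancl)
  then show "{y. (x, y) \<in> P\<^sup>*} = insert v {y. (x, y) \<in> (Q C)\<^sup>*}"
    using rtrancl_P_cases[OF assms] QP by blast
  show "{y. (x, y) \<in> (Q C)\<^sup>*} \<subseteq> C"
    using rtrancl_stays_in[OF _ Q_subset[OF assms(1)] assms(2)] by blast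
qed

lemma ancestors_root: "{y. (v, y) \<in> P\<^sup>*} = {v}"
  using root_no_parent by (auto elim: converse_rtranclE)

lemma anc_in_component:
  assumes "anc P w u" "w \<noteq> v"
  shows "\<exists>C\<in>Cs. u \<in> C \<and> w \<in> C \<and> anc (Q C) w u"
proof -
  obtain z where uz: "(u, z) \<in> P" and zw: "(z, w) \<in> P\<^sup>*"
    using assms(1) unfolding anc_def by (meson tranclD)
  obtain C where C: "C \<in> Cs" "u \<in> C" using P_domain[OF uz] by blast
  have "z \<noteq> v" using zw assms(2) ancestors_root by auto
  then have "(u, z) \<in> Q C" using P_cases[OF C uz] by blast
  moreover have "z \<in> C" using calculation Q_subset[OF C(1)] by auto
  then have "(z, w) \<in> (Q C)\<^sup>*" using rtrancl_P_cases[OF C(1) _ zw] assms(2) by blast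
  ultimately have "(u, w) \<in> (Q C)\<^sup>+" by auto
  then show ?thesis
    using C ancestors_in_component(2)[OF C] unfolding anc_def by (auto dest: trancl_into_rtrancl)
qed

lemma td_tree_graft:
  assumes irr: "irreflp E"
  shows "td_tree E S v P"
proof -
  have top: "\<forall>x\<in>S. (x, v) \<in> P\<^sup>*"
  proof
    fix x assume x: "x \<in> S"
    show "(x, v) \<in> P\<^sup>*"
    proof (cases "x = v")
      case False
      then obtain C where "C \<in> Cs" "x \<in> C" using component_exists[of x "S - {v}"] x by blast
      then show ?thesis using ancestors_in_component(1) by blast
    qed simp
  qed
  have "single_valued P"
  proof (rule single_valuedI)
    fix x y z assume xy: "(x, y) \<in> P" and xz: "(x, z) \<in> P"
    obtain C where C: "C \<in> Cs" "x \<in> C" using P_domain[OF xy] by blast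
    have "single_valued (Q C)" using td_tree_components C(1) unfolding td_tree_def by auto
    moreover have "(rt C, w) \<notin> Q C" for w using Q_subset[OF C(1)] by auto
    ultimately show "y = z" using P_cases[OF C xy] P_cases[OF C xz] by (metis single_valuedD)
  qed
  moreover have "acyclic P"
  proof (rule acyclicI, intro allI notI)
    fix x assume "(x, x) \<in> P\<^sup>+"
    then obtain y where xy: "(x, y) \<in> P" and yx: "(y, x) \<in> P\<^sup>*" by (meson tranclD)
    obtain C where C: "C \<in> Cs" "x \<in> C" using P_domain[OF xy] by blast
    have "x \<noteq> v" using C component_subset by auto
    then have "y \<noteq> v" using yx ancestors_root by auto
    then have xyQ: "(x, y) \<in> Q C" using P_cases[OF C xy] by auto
    then have "y \<in> C" using Q_subset[OF C(1)] by auto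
    then have "(y, x) \<in> (Q C)\<^sup>*" using rtrancl_P_cases[OF C(1) _ yx] \<open>x \<noteq> v\<close> by auto
    with xyQ have "(x, x) \<in> (Q C)\<^sup>+" by auto
    then show False using td_tree_components C(1) unfolding td_tree_def acyclic_def by auto
  qed
  moreover have "edges_comparable E S P"
    unfolding edges_comparable_def
  proof (intro ballI impI)
    fix a b assume ab: "a \<in> S" "b \<in> S" "E a b"
    show "anc P a b \<or> anc P b a"
    proof (cases "a = v \<or> b = v")
      case True
      have "a \<noteq> b" using ab irr by (auto simp: irreflp_def)
      then show ?thesis using True top ab unfolding anc_def by (metis rtrancl_eq_or_trancl)
    next
      case False
      then obtain C where C: "C \<in> Cs" "a \<in> C" using component_exists[of a "S - {v}"] ab by blast
      then have "b \<in> C" using component_edge_closed[OF sym C] ab False by auto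
      then have "anc (Q C) a b \<or> anc (Q C) b a"
        using td_tree_components C ab unfolding td_tree_def edges_comparable_def by auto
      then show ?thesis using trancl_mono[OF _ Q_subset_P[OF C(1)]] unfolding anc_def by blast
    qed
  qed
  ultimately show ?thesis unfolding td_tree_def using v_in P_subset top by auto
qed

lemma card_ancestors_in_component:
  assumes "finite S" "C \<in> Cs" "x \<in> C"
  shows "card {y. (x, y) \<in> P\<^sup>*} = Suc (card {y. (x, y) \<in> (Q C)\<^sup>*})"
proof -
  have "{y. (x, y) \<in> (Q C)\<^sup>*} \<subseteq> S - {v}"
    using ancestors_in_component(2)[OF assms(2,3)] component_subset[OF assms(2)] by blast
  moreover from this have "finite {y. (x, y) \<in> (Q C)\<^sup>*}"
    using assms(1) by (rule finite_subset[OF _ finite_Diff])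
  ultimately show ?thesis
    unfolding ancestors_in_component(1)[OF assms(2,3)] by (subst card_insert_disjoint) auto
qed

lemma forest_depth_graft_le:
  assumes "finite S" "S \<noteq> {v}" "\<forall>C\<in>Cs. forest_depth C (Q C) < k"
  shows "forest_depth S P \<le> k"
  unfolding forest_depth_def
proof (rule Max.boundedI)
  show "finite ((\<lambda>x. card {y. (x, y) \<in> P\<^sup>*}) ` S)" using assms(1) by simp
  show "(\<lambda>x. card {y. (x, y) \<in> P\<^sup>*}) ` S \<noteq> {}" using v_in by auto
next
  fix a assume "a \<in> (\<lambda>x. card {y. (x, y) \<in> P\<^sup>*}) ` S"
  then obtain x where x: "x \<in> S" "a = card {y. (x, y) \<in> P\<^sup>*}" by auto
  show "a \<le> k"
  proof (cases "x = v")
    case True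
    obtain y where "y \<in> S - {v}" using assms(2) v_in by blast
    then obtain C where "C \<in> Cs" using component_exists by blast
    then show ?thesis using True x(2) ancestors_root assms(3) by fastforce
  next
    case False
    then obtain C where C: "C \<in> Cs" "x \<in> C" using component_exists[of x "S - {v}"] x(1) by blast
    have "finite C" using component_subset[OF C(1)] assms(1) finite_subset by blast
    then have "card {y. (x, y) \<in> (Q C)\<^sup>*} \<le> forest_depth C (Q C)"
      unfolding forest_depth_def using C(2) by (intro Max_ge) auto
    then show ?thesis using x(2) card_ancestors_in_component[OF assms(1) C] assms(3) C(1) by fastforce
  qed
qed

lemma forest_depth_component_less:
  assumes "finite S" "C \<in> Cs"
  shows "forest_depth C (Q C) < forest_depth S P"
proof -
  have fC: "finite C" using component_subset[OF assms(2)] assms(1) finite_subset by blast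
  have "forest_depth C (Q C) \<in> (\<lambda>x. card {y. (x, y) \<in> (Q C)\<^sup>*}) ` C"
    unfolding forest_depth_def using fC components_nonempty[OF assms(2)] by (intro Max_in) auto
  then obtain x where x: "x \<in> C" "forest_depth C (Q C) = card {y. (x, y) \<in> (Q C)\<^sup>*}" by auto
  have "card {y. (x, y) \<in> P\<^sup>*} \<le> forest_depth S P"
    unfolding forest_depth_def using assms(1) x(1) component_subset[OF assms(2)]
    by (intro Max_ge) auto
  then show ?thesis using x card_ancestors_in_component[OF assms x(1)] by simp
qed

end

lemma elim_tree_td_tree:
  assumes "elim_tree E S r P" "symp E" "irreflp E"
  shows "td_tree E S r P"
  using assms(1)
proof (induction rule: elim_tree.induct)
  case (single v)
  then show ?case using assms(3) unfolding td_tree_def edges_comparable_def anc_def irreflp_def acyclic_def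
    by auto
next
  case (step v S rt Q P)
  interpret elim_step E S v rt Q P
    using step assms(2) by unfold_locales (auto simp: graft_def)
  show ?case using td_tree_graft assms(3) .
qed

lemma elim_step_graft:
  assumes "symp E" "irreflp E" "v \<in> S"
    and "\<forall>C\<in>components E (S - {v}). elim_tree E C (rt C) (Q C)"
  shows "elim_step E S v rt Q (graft E S v rt Q)"
  using assms elim_tree_td_tree by unfold_locales auto

lemma elim_tree_graft:
  "\<lbrakk>v \<in> S; S \<noteq> {v}; \<forall>C\<in>components E (S - {v}). elim_tree E C (rt C) (Q C)\<rbrakk>
    \<Longrightarrow> elim_tree E S v (graft E S v rt Q)"
  unfolding graft_def by (rule elim_tree.step) auto

lemma elim_tree_graftE:
  assumes "elim_tree E S v P" "S \<noteq> {v}"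
  obtains rt Q where "\<forall>C\<in>components E (S - {v}). elim_tree E C (rt C) (Q C)"
    and "P = graft E S v rt Q"
  using assms unfolding graft_def by (cases rule: elim_tree.cases) auto

lemma elim_tree_root_in: "elim_tree E S r P \<Longrightarrow> r \<in> S"
  by (induction rule: elim_tree.induct) auto

section \<open>From treedepth decompositions to elimination trees\<close>

lemma common_ancestor:
  assumes "(x, y) \<in> (induced_edges E C)\<^sup>*" "x \<in> C" "single_valued P" "edges_comparable E C P"
  shows "\<exists>a\<in>C. (x, a) \<in> P\<^sup>* \<and> (y, a) \<in> P\<^sup>*"
  using assms(1)
proof (induction rule: rtrancl_induct)
  case (step y z)
  then obtain a where a: "a \<in> C" "(x, a) \<in> P\<^sup>*" "(y, a) \<in> P\<^sup>*" by blast
  have yz: "y \<in> C" "z \<in> C" "E y z" using step(2) unfolding induced_edges_def by auto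
  then have "(z, y) \<in> P\<^sup>+ \<or> (y, z) \<in> P\<^sup>+"
    using assms(4) unfolding edges_comparable_def anc_def by blast
  then consider "(z, a) \<in> P\<^sup>*" | "(a, z) \<in> P\<^sup>*"
    using a(3) single_valued_confluent[OF assms(3) a(3)]
    by (meson rtrancl_trans trancl_into_rtrancl)
  then show ?case
  proof cases
    case 1
    then show ?thesis using a by blast
  next
    case 2
    then show ?thesis using a(2) yz(2) by (blast intro: rtrancl_trans)
  qed
qed (use assms(2) in auto)

lemma connected_has_top:
  assumes "finite C" "connected_on E C" "single_valued P" "acyclic P" "edges_comparable E C P"
  shows "\<exists>c0\<in>C. \<forall>c\<in>C. (c, c0) \<in> P\<^sup>*"
proof -
  define R where "R = {(a, b). a \<in> C \<and> b \<in> C \<and> (b, a) \<in> P\<^sup>+}"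
  have "R \<subseteq> C \<times> C" unfolding R_def by auto
  then have "finite R" using assms(1) finite_subset by blast
  moreover have "R\<^sup>+ \<subseteq> (P\<^sup>+)\<inverse>"
  proof (rule subrelI)
    fix a b assume "(a, b) \<in> R\<^sup>+"
    then show "(a, b) \<in> (P\<^sup>+)\<inverse>"
      by (induction rule: trancl_induct) (auto simp: R_def intro: trancl_trans)
  qed
  then have "acyclic R" using assms(4) unfolding acyclic_def by auto
  ultimately have "wf R" by (rule finite_acyclic_wf)
  obtain x where "x \<in> C" using assms(2) unfolding connected_on_def by auto
  then obtain c0 where c0: "c0 \<in> C" "\<And>y. (y, c0) \<in> R \<Longrightarrow> y \<notin> C"
    using wfE_min[OF \<open>wf R\<close>] by metis
  have "(c, c0) \<in> P\<^sup>*" if c: "c \<in> C" for c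
  proof -
    have "(c0, c) \<in> (induced_edges E C)\<^sup>*" using assms(2) c c0(1) unfolding connected_on_def by auto
    then obtain a where a: "a \<in> C" "(c0, a) \<in> P\<^sup>*" "(c, a) \<in> P\<^sup>*"
      using common_ancestor[OF _ c0(1) assms(3,5)] by blast
    have "a = c0"
    proof (rule ccontr)
      assume "a \<noteq> c0"
      then have "(a, c0) \<in> R" using a(1,2) c0(1) unfolding R_def by (auto simp: rtrancl_eq_or_trancl)
      then show False using c0(2) a(1) by blast
    qed
    then show ?thesis using a by simp
  qed
  then show ?thesis using c0(1) by blast
qed

definition depth_on :: "int set \<Rightarrow> (int \<times> int) set \<Rightarrow> nat" where
  "depth_on Y P = Max ((\<lambda>y. card {z \<in> Y. (y, z) \<in> P\<^sup>*}) ` Y)"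

lemma forest_depth_eq_depth_on: "P \<subseteq> B \<times> S \<Longrightarrow> forest_depth S P = depth_on S P"
  unfolding forest_depth_def depth_on_def
  by (intro arg_cong[where f = Max] image_cong refl arg_cong[where f = card])
    (auto dest: rtrancl_stays_in)

lemma depth_on_less:
  assumes "finite Y" "C \<subseteq> Y" "C \<noteq> {}" "y0 \<in> Y - C" "\<forall>c\<in>C. (c, y0) \<in> P\<^sup>*"
  shows "depth_on C P < depth_on Y P"
  unfolding depth_on_def
proof (rule Max_less_iff[THEN iffD2], goal_cases)
  case 3
  have "card {z \<in> C. (c, z) \<in> P\<^sup>*} < Max ((\<lambda>y. card {z \<in> Y. (y, z) \<in> P\<^sup>*}) ` Y)" if "c \<in> C" for c
  proof -
    have "{z \<in> C. (c, z) \<in> P\<^sup>*} \<subset> {z \<in> Y. (c, z) \<in> P\<^sup>*}" using assms(2,4,5) that by auto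
    then have "card {z \<in> C. (c, z) \<in> P\<^sup>*} < card {z \<in> Y. (c, z) \<in> P\<^sup>*}"
      using assms(1) by (simp add: psubset_card_mono)
    also have "\<dots> \<le> Max ((\<lambda>y. card {z \<in> Y. (y, z) \<in> P\<^sup>*}) ` Y)"
      using assms(1,2) that by (intro Max_ge) auto
    finally show ?thesis .
  qed
  then show ?case by blast
qed (use assms(3) finite_subset[OF assms(2,1)] in auto)

lemma elim_tree_of_decomposition:
  assumes "symp E" "irreflp E" "single_valued P" "acyclic P"
  shows "\<lbrakk>finite Y; connected_on E Y; edges_comparable E Y P; y0 \<in> Y; \<forall>y\<in>Y. (y, y0) \<in> P\<^sup>*\<rbrakk>
    \<Longrightarrow> \<exists>Q. elim_tree E Y y0 Q \<and> forest_depth Y Q \<le> depth_on Y P"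
proof (induction "card Y" arbitrary: Y y0 rule: less_induct)
  case less
  show ?case
  proof (cases "Y = {y0}")
    case True
    then have "{z \<in> Y. (y0, z) \<in> P\<^sup>*} = {y0}" "{z. (y0, z) \<in> {}\<^sup>*} = {y0}" by auto
    then show ?thesis using True elim_tree.single[of E y0]
      by (intro exI[of _ "{}"]) (simp add: forest_depth_def depth_on_def)
  next
    case False
    let ?Cs = "components E (Y - {y0})"
    have "\<forall>C\<in>?Cs. \<exists>c Q. elim_tree E C c Q \<and> forest_depth C Q < depth_on Y P"
    proof
      fix C assume C: "C \<in> ?Cs"
      have CY: "C \<subseteq> Y - {y0}" using components_subset[OF C] .
      have fC: "finite C" using CY less.prems(1) finite_subset by blast
      have cC: "connected_on E C" using connected_on_component[OF assms(1) C] .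
      have cmpC: "edges_comparable E C P" using edges_comparable_subset less.prems(3) CY by blast
      obtain c where c: "c \<in> C" "\<forall>x\<in>C. (x, c) \<in> P\<^sup>*"
        using connected_has_top[OF fC cC assms(3,4) cmpC] by blast
      have "card C < card Y" using CY less.prems(1,4) by (intro psubset_card_mono) auto
      then obtain Q where "elim_tree E C c Q" "forest_depth C Q \<le> depth_on C P"
        using less.hyps[OF _ fC cC cmpC c] by blast
      moreover have "depth_on C P < depth_on Y P"
        using depth_on_less[OF less.prems(1) _ components_nonempty[OF C]] CY less.prems(4,5) by auto
      ultimately show "\<exists>c Q. elim_tree E C c Q \<and> forest_depth C Q < depth_on Y P"
        using le_less_trans by blast
    qed
    then obtain rt Q
      where "\<forall>C\<in>?Cs. elim_tree E C (rt C) (Q C) \<and> forest_depth C (Q C) < depth_on Y P"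
      by metis
    then show ?thesis
      using elim_tree_graft[OF less.prems(4) False]
        elim_step.forest_depth_graft_le[OF elim_step_graft[OF assms(1,2) less.prems(4)] less.prems(1) False]
      by blast
  qed
qed

lemma elim_tree_exists:
  assumes "symp E"
  shows "finite S \<Longrightarrow> connected_on E S \<Longrightarrow> \<exists>r P. elim_tree E S r P"
proof (induction "card S" arbitrary: S rule: less_induct)
  case less
  obtain r where r: "r \<in> S" using less.prems(2) unfolding connected_on_def by auto
  show ?case
  proof (cases "S = {r}")
    case True
    then show ?thesis using elim_tree.single by blast
  next
    case False
    have "\<forall>C\<in>components E (S - {r}). \<exists>c Q. elim_tree E C c Q"
    proof
      fix C assume C: "C \<in> components E (S - {r})"
      have CS: "C \<subseteq> S - {r}" using components_subset[OF C] .
      then have "card C < card S" using less.prems(1) r by (intro psubset_card_mono) auto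
      moreover have "finite C" using CS less.prems(1) finite_subset by blast
      ultimately show "\<exists>c Q. elim_tree E C c Q"
        using less.hyps connected_on_component[OF assms C] by blast
    qed
    then obtain rt Q where "\<forall>C\<in>components E (S - {r}). elim_tree E C (rt C) (Q C)"
      by metis
    then show ?thesis using elim_tree_graft[OF r False] by blast
  qed
qed

section \<open>Rerooting\<close>

lemma trancl_inv_image_subset: "(inv_image P f)\<^sup>+ \<subseteq> inv_image (P\<^sup>+) f"
proof (rule subrelI)
  fix a b assume "(a, b) \<in> (inv_image P f)\<^sup>+"
  then show "(a, b) \<in> inv_image (P\<^sup>+) f"
    by (induction rule: trancl_induct) (auto intro: trancl_into_trancl)
qed

lemma rtrancl_inv_image_subset: "(inv_image P f)\<^sup>* \<subseteq> inv_image (P\<^sup>*) f"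
proof (rule subrelI)
  fix a b assume "(a, b) \<in> (inv_image P f)\<^sup>*"
  then show "(a, b) \<in> inv_image (P\<^sup>*) f"
    by (induction rule: rtrancl_induct) (auto intro: rtrancl_into_rtrancl)
qed

lemma inv_image_involution: "(\<And>x. f (f x) = x) \<Longrightarrow> inv_image (inv_image P f) f = P"
  by (simp add: inv_image_def)

lemma trancl_inv_image_involution:
  assumes "\<And>x. f (f x) = x"
  shows "(inv_image P f)\<^sup>+ = inv_image (P\<^sup>+) f"
proof
  have "P\<^sup>+ \<subseteq> inv_image ((inv_image P f)\<^sup>+) f"
    using trancl_inv_image_subset[of "inv_image P f" f] by (simp add: inv_image_involution assms)
  then show "inv_image (P\<^sup>+) f \<subseteq> (inv_image P f)\<^sup>+" using assms by (auto simp: inv_image_def)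
qed (rule trancl_inv_image_subset)

lemma rtrancl_inv_image_involution:
  assumes "\<And>x. f (f x) = x"
  shows "(inv_image P f)\<^sup>* = inv_image (P\<^sup>*) f"
proof
  have "P\<^sup>* \<subseteq> inv_image ((inv_image P f)\<^sup>*) f"
    using rtrancl_inv_image_subset[of "inv_image P f" f] by (simp add: inv_image_involution assms)
  then show "inv_image (P\<^sup>*) f \<subseteq> (inv_image P f)\<^sup>*" using assms by (auto simp: inv_image_def)
qed (rule rtrancl_inv_image_subset)

lemma depth_on_inv_image_involution:
  assumes inv: "\<And>x. f (f x) = x" and fS: "\<And>x. f x \<in> S \<longleftrightarrow> x \<in> S"
  shows "depth_on S (inv_image P f) = depth_on S P"
proof -
  define h where "h y = card {z \<in> S. (y, z) \<in> P\<^sup>*}" for y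
  have "{z \<in> S. (y, z) \<in> (inv_image P f)\<^sup>*} = f ` {z \<in> S. (f y, z) \<in> P\<^sup>*}" for y
    using inv fS by (auto simp: rtrancl_inv_image_involution image_iff) metis
  moreover have "inj f" using inv by (metis injI)
  ultimately have "card {z \<in> S. (y, z) \<in> (inv_image P f)\<^sup>*} = h (f y)" for y
    unfolding h_def by (simp add: card_image inj_on_subset)
  moreover have "f ` S = S" using inv fS by (metis subsetI subset_antisym image_subset_iff imageI)
  then have "(\<lambda>y. h (f y)) ` S = h ` S" by (metis image_image)
  ultimately show ?thesis unfolding depth_on_def h_def by simp
qed

lemma transpose_edge:
  assumes "symp E" "irreflp E" "E a b" "\<And>b. b \<noteq> u \<Longrightarrow> E r b \<Longrightarrow> E u b"
  shows "transpose r u a = r \<or> transpose r u b = r \<or> E (transpose r u a) (transpose r u b)"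
proof -
  have "b \<noteq> a" using assms(2,3) by (auto simp: irreflp_def)
  consider "a = u \<or> b = u" | "a = r" "b \<noteq> u" | "b = r" "a \<noteq> u" | "a \<notin> {r, u}" "b \<notin> {r, u}"
    by blast
  then show ?thesis
  proof cases
    case 2
    then show ?thesis using assms(3,4) \<open>b \<noteq> a\<close> by auto
  next
    case 3
    then have "E u a" using assms(1,3,4) \<open>b \<noteq> a\<close> by (auto simp: symp_def)
    then show ?thesis using 3 assms(1) \<open>b \<noteq> a\<close> by (auto simp: symp_def)
  qed (use assms(3) in auto)
qed

lemma td_tree_transpose_root:
  assumes sym: "symp E" and irr: "irreflp E" and T: "td_tree E S r P" and u: "u \<in> S"
    and nb: "\<And>b. b \<noteq> u \<Longrightarrow> E r b \<Longrightarrow> E u b"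
  shows "td_tree E S u (inv_image P (transpose r u))"
proof -
  define \<sigma> where "\<sigma> = transpose r u"
  have inv: "\<sigma> (\<sigma> x) = x" for x unfolding \<sigma>_def by simp
  have r: "r \<in> S" and Psub: "P \<subseteq> (S - {r}) \<times> S" and top: "\<forall>x\<in>S. (x, r) \<in> P\<^sup>*"
    and sv: "single_valued P" and acyc: "acyclic P" and cmp: "edges_comparable E S P"
    using T unfolding td_tree_def by auto
  have \<sigma>S: "\<sigma> x \<in> S \<longleftrightarrow> x \<in> S" for x using r u unfolding \<sigma>_def transpose_def by auto
  have \<sigma>r: "\<sigma> x = r \<longleftrightarrow> x = u" for x unfolding \<sigma>_def transpose_def by auto
  have tr: "(a, b) \<in> (inv_image P \<sigma>)\<^sup>+ \<longleftrightarrow> (\<sigma> a, \<sigma> b) \<in> P\<^sup>+" for a b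
    using trancl_inv_image_involution[of \<sigma> P] inv by simp
  have "inv_image P \<sigma> \<subseteq> (S - {u}) \<times> S" using Psub \<sigma>S \<sigma>r by (auto simp: inv_image_def)
  moreover have "\<forall>x\<in>S. (x, u) \<in> (inv_image P \<sigma>)\<^sup>*"
    using top \<sigma>S \<sigma>r[of u] rtrancl_inv_image_involution[of \<sigma> P] inv by auto
  moreover have "single_valued (inv_image P \<sigma>)"
    using sv inv unfolding single_valued_def inv_image_def by (metis case_prodD mem_Collect_eq)
  moreover have "acyclic (inv_image P \<sigma>)" using acyc tr unfolding acyclic_def by blast
  moreover have "edges_comparable E S (inv_image P \<sigma>)"
    unfolding edges_comparable_def anc_def tr
  proof (intro ballI impI)
    fix a b assume a: "a \<in> S" and b: "b \<in> S" and ab: "E a b"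
    have "\<sigma> a \<noteq> \<sigma> b" using ab irr inv by (metis irreflp_def)
    have below_r: "x \<in> S \<Longrightarrow> x \<noteq> r \<Longrightarrow> (x, r) \<in> P\<^sup>+" for x
      using top by (metis rtrancl_eq_or_trancl)
    consider "\<sigma> a = r" | "\<sigma> b = r" | "E (\<sigma> a) (\<sigma> b)"
      using transpose_edge[OF sym irr ab nb] unfolding \<sigma>_def by blast
    then show "(\<sigma> b, \<sigma> a) \<in> P\<^sup>+ \<or> (\<sigma> a, \<sigma> b) \<in> P\<^sup>+"
    proof cases
      case 3
      then show ?thesis using cmp a b \<sigma>S unfolding edges_comparable_def anc_def by blast
    qed (use below_r a b \<sigma>S \<open>\<sigma> a \<noteq> \<sigma> b\<close> in auto)
  qed
  ultimately show ?thesis using u unfolding td_tree_def \<sigma>_def by blast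
qed

lemma elim_tree_reroot:
  assumes sym: "symp E" and irr: "irreflp E" and "finite S" "connected_on E S"
    and "elim_tree E S r P" "u \<in> S" "\<And>b. b \<noteq> u \<Longrightarrow> E r b \<Longrightarrow> E u b"
  shows "\<exists>Q. elim_tree E S u Q \<and> forest_depth S Q \<le> forest_depth S P"
proof -
  define P' where "P' = inv_image P (transpose r u)"
  have T: "td_tree E S r P" using elim_tree_td_tree[OF assms(5) sym irr] .
  then have "td_tree E S u P'"
    unfolding P'_def using td_tree_transpose_root[OF sym irr _ assms(6,7)] by blast
  then obtain Q where Q: "elim_tree E S u Q" "forest_depth S Q \<le> depth_on S P'"
    using elim_tree_of_decomposition[OF sym irr _ _ assms(3,4)] unfolding td_tree_def by blast
  have "depth_on S P' = depth_on S P"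
    unfolding P'_def using T assms(6)
    by (intro depth_on_inv_image_involution) (auto simp: td_tree_def transpose_def)
  also have "\<dots> = forest_depth S P"
    using T forest_depth_eq_depth_on unfolding td_tree_def by metis
  finally show ?thesis using Q by auto
qed


section \<open>Dominance\<close>

lemma simple_graphD:
  assumes "simple_graph V E"
  shows "finite V" "symp E" "irreflp E" "\<And>x y. E x y \<Longrightarrow> x \<in> V \<and> y \<in> V"
  using assms unfolding simple_graph_def symp_def irreflp_def by auto

lemma dominates_nbhd:
  assumes "simple_graph V E" "dominates V E u w" "b \<noteq> u" "E w b"
  shows "E u b"
proof -
  have "nbhd V E w - {u} \<subseteq> nbhd V E u - {w}" using assms(2) unfolding dominates_def by auto
  moreover have "b \<in> nbhd V E w - {u}"
    using assms(3,4) simple_graphD(4)[OF assms(1)] unfolding nbhd_def by auto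
  ultimately show ?thesis unfolding nbhd_def by auto
qed

definition dom_rank :: "int set \<Rightarrow> (int \<Rightarrow> int \<Rightarrow> bool) \<Rightarrow> int \<Rightarrow> nat \<times> int" where
  "dom_rank V E x = (card (nbhd V E x), x)"

lemma dom_rank_less:
  assumes "simple_graph V E" "dominates V E u w"
  shows "dom_rank V E w < dom_rank V E u"
proof -
  have fin: "finite (nbhd V E x)" for x using simple_graphD(1)[OF assms(1)] by (simp add: nbhd_def)
  have split: "card (nbhd V E x) = card (nbhd V E x - {y}) + (if y \<in> nbhd V E x then 1 else 0)"
    for x y using fin[of x] card_gt_0_iff[of "nbhd V E x"] by (cases "y \<in> nbhd V E x") auto
  have "w \<in> nbhd V E u \<longleftrightarrow> u \<in> nbhd V E w"
    using simple_graphD(2,4)[OF assms(1)] unfolding nbhd_def symp_def by blast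
  then have "card (nbhd V E u) - card (nbhd V E u - {w}) = card (nbhd V E w) - card (nbhd V E w - {u})"
    and "card (nbhd V E u - {w}) \<le> card (nbhd V E u)" "card (nbhd V E w - {u}) \<le> card (nbhd V E w)"
    using split[of u w] split[of w u] by auto
  moreover have "card (nbhd V E w - {u}) < card (nbhd V E u - {w}) \<or>
      card (nbhd V E w - {u}) = card (nbhd V E u - {w}) \<and> w < u"
    using assms(2) fin unfolding dominates_def by (auto intro: psubset_card_mono)
  ultimately show ?thesis unfolding dom_rank_def by auto
qed

lemma elim_tree_undominated_root:
  assumes sg: "simple_graph V E" and "S \<subseteq> V" "connected_on E S" "elim_tree E S r0 P0"
  shows "\<exists>r P. elim_tree E S r P \<and> forest_depth S P \<le> forest_depth S P0 \<and>
    (\<forall>u\<in>S. \<not> dominates V E u r)"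
proof -
  note G = simple_graphD[OF sg]
  have fS: "finite S" using assms(2) G(1) finite_subset by blast
  define R where "R = {u \<in> S. \<exists>P. elim_tree E S u P \<and> forest_depth S P \<le> forest_depth S P0}"
  have "r0 \<in> R" using assms(4) elim_tree_root_in unfolding R_def by blast
  moreover have "finite R" using fS unfolding R_def by simp
  ultimately have "Max (dom_rank V E ` R) \<in> dom_rank V E ` R" by (intro Max_in) auto
  then obtain r where "r \<in> R" and r_Max: "dom_rank V E r = Max (dom_rank V E ` R)" by auto
  have r_max: "dom_rank V E u \<le> dom_rank V E r" if "u \<in> R" for u
    unfolding r_Max using \<open>finite R\<close> that by simp
  from \<open>r \<in> R\<close> obtain P where P: "elim_tree E S r P" "forest_depth S P \<le> forest_depth S P0"
    unfolding R_def by blast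
  have "\<not> dominates V E u r" if u: "u \<in> S" for u
  proof
    assume ur: "dominates V E u r"
    obtain Q where "elim_tree E S u Q" "forest_depth S Q \<le> forest_depth S P"
      using elim_tree_reroot[OF G(2,3) fS assms(3) P(1) u] dominates_nbhd[OF sg ur] by blast
    then have "u \<in> R" unfolding R_def using u P(2) by auto
    then show False using r_max dom_rank_less[OF sg ur] by (simp add: not_le[symmetric])
  qed
  then show ?thesis using P by blast
qed

definition respects_dominance :: "int set \<Rightarrow> (int \<Rightarrow> int \<Rightarrow> bool) \<Rightarrow> int set \<Rightarrow> (int \<times> int) set \<Rightarrow> bool" where
  "respects_dominance V E S P \<longleftrightarrow> (\<forall>w\<in>S. \<forall>u\<in>S. dominates V E u w \<longrightarrow> \<not> anc P w u)"

lemma respects_dominance_graft: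
  assumes "symp E" "irreflp E" "v \<in> S"
    and subtrees: "\<forall>C\<in>components E (S - {v}). elim_tree E C (rt C) (Q C) \<and> respects_dominance V E C (Q C)"
    and undominated: "\<forall>u\<in>S. \<not> dominates V E u v"
  shows "respects_dominance V E S (graft E S v rt Q)"
  unfolding respects_dominance_def
proof (intro ballI impI notI)
  fix w u assume u: "u \<in> S" and uw: "dominates V E u w" and anc: "anc (graft E S v rt Q) w u"
  interpret elim_step E S v rt Q "graft E S v rt Q"
    using elim_step_graft[OF assms(1-3)] subtrees by blast
  have "w \<noteq> v" using undominated u uw by blast
  then obtain C where "C \<in> components E (S - {v})" "u \<in> C" "w \<in> C" "anc (Q C) w u"
    using anc_in_component[OF anc] by blast
  then show False using subtrees uw unfolding respects_dominance_def by blast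
qed

lemma elim_tree_respects_dominance:
  assumes sg: "simple_graph V E"
  shows "\<lbrakk>S \<subseteq> V; connected_on E S; elim_tree E S r0 P0\<rbrakk>
    \<Longrightarrow> \<exists>r P. elim_tree E S r P \<and> forest_depth S P \<le> forest_depth S P0 \<and> respects_dominance V E S P"
proof (induction "card S" arbitrary: S r0 P0 rule: less_induct)
  case less
  note G = simple_graphD[OF sg]
  have fS: "finite S" using less.prems(1) G(1) finite_subset by blast
  obtain r P where P: "elim_tree E S r P" "forest_depth S P \<le> forest_depth S P0"
    and undominated: "\<forall>u\<in>S. \<not> dominates V E u r"
    using elim_tree_undominated_root[OF sg less.prems] by blast
  have r: "r \<in> S" using elim_tree_root_in[OF P(1)] .
  show ?case
  proof (cases "S = {r}")
    case True
    then have "P = {}" using elim_tree_td_tree[OF P(1) G(2,3)] unfolding td_tree_def by auto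
    then show ?thesis
      using P unfolding respects_dominance_def anc_def by (intro exI[of _ r] exI[of _ "{}"]) simp
  next
    case False
    let ?Cs = "components E (S - {r})"
    obtain rt Q where Q: "\<forall>C\<in>?Cs. elim_tree E C (rt C) (Q C)" and P_eq: "P = graft E S r rt Q"
      using elim_tree_graftE[OF P(1) False] by blast
    have "\<forall>C\<in>?Cs. \<exists>c Q'. elim_tree E C c Q' \<and> forest_depth C Q' < forest_depth S P \<and>
      respects_dominance V E C Q'"
    proof
      fix C assume C: "C \<in> ?Cs"
      have CS: "C \<subseteq> S - {r}" using components_subset[OF C] .
      then have "card C < card S" using fS r by (intro psubset_card_mono) auto
      moreover have "C \<subseteq> V" using CS less.prems(1) by blast
      ultimately obtain c Q' where "elim_tree E C c Q'" "forest_depth C Q' \<le> forest_depth C (Q C)"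
          "respects_dominance V E C Q'"
        using less.hyps[OF _ _ connected_on_component[OF G(2) C]] Q C by blast
      moreover have "forest_depth C (Q C) < forest_depth S P"
        using elim_step.forest_depth_component_less[OF elim_step_graft[OF G(2,3) r Q] fS C]
        unfolding P_eq .
      ultimately show "\<exists>c Q'. elim_tree E C c Q' \<and> forest_depth C Q' < forest_depth S P \<and>
        respects_dominance V E C Q'" by (meson le_less_trans)
    qed
    then obtain rt' Q' where Q': "\<forall>C\<in>?Cs. elim_tree E C (rt' C) (Q' C) \<and>
        forest_depth C (Q' C) < forest_depth S P \<and> respects_dominance V E C (Q' C)"
      by metis
    have "elim_tree E S r (graft E S r rt' Q')" using elim_tree_graft[OF r False] Q' by blast
    moreover have "forest_depth S (graft E S r rt' Q') \<le> forest_depth S P"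
      using elim_step.forest_depth_graft_le[OF elim_step_graft[OF G(2,3) r] fS False] Q' by blast
    moreover have "respects_dominance V E S (graft E S r rt' Q')"
      using respects_dominance_graft[OF G(2,3) r _ undominated] Q' by blast
    ultimately show ?thesis using P(2) by (meson order_trans)
  qed
qed

section \<open>Optimal elimination trees\<close>

lemma elim_tree_td_decomposition:
  assumes "simple_graph V E" "elim_tree E V r P"
  shows "td_decomposition V E P"
  using elim_tree_td_tree[OF assms(2) simple_graphD(2,3)[OF assms(1)]] simple_graphD(4)[OF assms(1)]
  unfolding td_decomposition_def rooted_forest_def td_tree_def edges_comparable_def acyclic_def
  by blast

lemma treedepth_attained:
  "td_decomposition V E P \<Longrightarrow> \<exists>P. td_decomposition V E P \<and> forest_depth V P = treedepth V E"
  unfolding treedepth_def by (rule LeastI_ex) blast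

lemma treedepth_le: "td_decomposition V E P \<Longrightarrow> treedepth V E \<le> forest_depth V P"
  unfolding treedepth_def by (rule Least_le) blast

lemma optimal_elim_tree_exists:
  assumes "simple_graph V E" "connected_on E V"
  shows "\<exists>r P. elim_tree E V r P \<and> forest_depth V P \<le> treedepth V E"
proof -
  note G = simple_graphD[OF assms(1)]
  obtain r0 P0 where "elim_tree E V r0 P0" using elim_tree_exists[OF G(2,1) assms(2)] by blast
  then obtain P where P: "td_decomposition V E P" "forest_depth V P = treedepth V E"
    using treedepth_attained elim_tree_td_decomposition[OF assms(1)] by blast
  then have props: "single_valued P" "acyclic P" "edges_comparable E V P" "P \<subseteq> V \<times> V"
    unfolding td_decomposition_def rooted_forest_def edges_comparable_def acyclic_def by auto
  obtain y0 where "y0 \<in> V" "\<forall>y\<in>V. (y, y0) \<in> P\<^sup>*"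
    using connected_has_top[OF G(1) assms(2) props(1-3)] by blast
  then obtain Q where "elim_tree E V y0 Q" "forest_depth V Q \<le> depth_on V P"
    using elim_tree_of_decomposition[OF G(2,3) props(1,2) G(1) assms(2) props(3)] by blast
  moreover have "depth_on V P = treedepth V E"
    using forest_depth_eq_depth_on[OF props(4)] P(2) by simp
  ultimately show ?thesis by auto
qed

theorem mainTheorem1:
  fixes V :: "int set" and E :: "int \<Rightarrow> int \<Rightarrow> bool"
  assumes "simple_graph V E"
    and "connected_on E V"
  shows "\<exists>r P. elim_tree E V r P \<and> forest_depth V P = treedepth V E \<and>
           (\<forall>w\<in>V. \<forall>v\<in>V. dominates V E v w \<longrightarrow> \<not> anc P w v)"
proof -
  obtain r0 P0 where "elim_tree E V r0 P0" "forest_depth V P0 \<le> treedepth V E"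
    using optimal_elim_tree_exists[OF assms] by blast
  then obtain r P where P: "elim_tree E V r P" "forest_depth V P \<le> treedepth V E"
    "respects_dominance V E V P"
    using elim_tree_respects_dominance[OF assms(1) subset_refl assms(2)] by (meson order_trans)
  moreover have "treedepth V E \<le> forest_depth V P"
    using treedepth_le[OF elim_tree_td_decomposition[OF assms(1) P(1)]] .
  ultimately show ?thesis unfolding respects_dominance_def by (intro exI[of _ r] exI[of _ P]) simp
qed

end
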